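(* Let $(S,\alpha)$ be a twisted K3 surface with $d=\mathrm{ord}(\alpha)$, and let $B\in\frac1d H^2(S,\mathbb Z)$ be a B-field lift of $\alpha$. Let $\kappa:\widetilde{NS}(S)\to H^0(S,\mathbb Q)\oplus NS(S)\oplus H^4(S,\mathbb Q)$ be $\kappa(a,l,b)=(da,l,\tfrac1d b)$. Then $e^B\circ\kappa$ is an orientation-preserving isometry $$e^B\circ\kappa:\widetilde{NS}(S)\xrightarrow{\sim}\big\langle \widetilde{NS}(S,B),\,(0,0,-\tfrac1d)\big\rangle .$$
   Context: $S$ is a complex projective K3 surface with $NS(S)$, holomorphic 2-form class $\omega_S$. Mukai lattice $\widetilde H(S,\mathbb Z)=H^0\oplus H^2\oplus H^4$ with elements $(a,l,b)$ and pairing $((a,l,b),(a',l',b'))=(l,l')-ab'-a'b$, extended $\mathbb Q$-bilinearly; $\widetilde{NS}(S)=H^0\oplus NS(S)\oplus H^4$. For $B\in H^2(S,\mathbb Q)$, $e^B(a,l,b)=(a,l+aB,b+(B,l)+\frac a2(B,B))$. A B-field lift of $\alpha\in\mathrm{Br}(S)\cong H^2(S,\mathbb Q)/(NS(S)_{\mathbb Q}+H^2(S,\mathbb Z))$ is a preimage $B$. $\widetilde{NS}(S,B)=e^B(\omega_S)^\perp\cap\widetilde H(S,\mathbb Z)$ where $e^B(\omega_S)=(0,\omega_S,(B,\omega_S))$; $\langle \widetilde{NS}(S,B),(0,0,-\frac1d)\rangle$ denotes the lattice generated by these in $\widetilde H(S,\mathbb Q)$. Orientations: for any $B'$ (including $B'=0$),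 the signature-$(2,\rho(S))$ lattice $\widetilde{NS}(S,B')$ and any lattice in $\widetilde{NS}(S,B')_{\mathbb Q}$ is oriented by declaring the positive 2-plane with ordered basis $e^{B'}(1,0,-1),e^{B'}(0,h,0)$, $h$ ample, positively oriented. *)

theory Defs
  imports "HOL-Analysis.Analysis"
begin

text \<open>H^2(S,Z) is modelled by the integral vectors of real^'n (coordinates in a Z-basis),
  with intersection form given by the Gram matrix Q.  The class omega_S = x + i y
  is given by its real and imaginary parts.\<close>

definition bil :: "real^'n^'n \<Rightarrow> real^'n \<Rightarrow> real^'n \<Rightarrow> real" where
  "bil Q u v = u \<bullet> (Q *v v)"

definition integral_vec :: "real^'n \<Rightarrow> bool" where
  "integral_vec v \<longleftrightarrow> (\<forall>i. v $ i \<in> \<int>)"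

definition rational_vec :: "real^'n \<Rightarrow> bool" where
  "rational_vec v \<longleftrightarrow> (\<forall>i. v $ i \<in> \<rat>)"

definition K3_lattice_form :: "real^'n^'n \<Rightarrow> bool" where
  "K3_lattice_form Q \<longleftrightarrow>
     CARD('n) = 22 \<and>
     (\<forall>i j. Q $ i $ j \<in> \<int>) \<and> transpose Q = Q \<and>
     (\<forall>i. \<exists>k\<in>\<int>. Q $ i $ i = 2 * k) \<and> \<bar>det Q\<bar> = 1 \<and>
     (\<exists>(P::real^'n^'n) Pos. invertible P \<and> card Pos = 3 \<and>
        transpose P ** Q ** P = (\<chi> i j. if i = j then (if i \<in> Pos then 1 else -1) else 0))"

text \<open>omega = x + i y is a period: (omega,omega) = 0 and (omega, conj omega) > 0.\<close>
definition K3_period :: "real^'n^'n \<Rightarrow> real^'n \<Rightarrow> real^'n \<Rightarrow> bool" where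
  "K3_period Q x y \<longleftrightarrow> bil Q x x = bil Q y y \<and> bil Q x y = 0 \<and> bil Q x x > 0"

definition NS :: "real^'n^'n \<Rightarrow> real^'n \<Rightarrow> real^'n \<Rightarrow> (real^'n) set" where
  "NS Q x y = {l. integral_vec l \<and> bil Q l x = 0 \<and> bil Q l y = 0}"

definition NSQ :: "real^'n^'n \<Rightarrow> real^'n \<Rightarrow> real^'n \<Rightarrow> (real^'n) set" where
  "NSQ Q x y = {(1 / real n) *\<^sub>R l | n l. n > 0 \<and> l \<in> NS Q x y}"

text \<open>Order of the Brauer class alpha = [B] in H^2(S,Q)/(NS(S)_Q + H^2(S,Z)).\<close>
definition brauer_ord :: "real^'n^'n \<Rightarrow> real^'n \<Rightarrow> real^'n \<Rightarrow> real^'n \<Rightarrow> nat" where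
  "brauer_ord Q x y B =
     (LEAST n::nat. n > 0 \<and> real n *\<^sub>R B \<in> {u + v | u v. u \<in> NSQ Q x y \<and> integral_vec v})"

type_synonym 'n mukai = "real \<times> (real^'n) \<times> real"

definition mukai_pair :: "real^'n^'n \<Rightarrow> 'n mukai \<Rightarrow> 'n mukai \<Rightarrow> real" where
  "mukai_pair Q v w =
     (case v of (a, l, b) \<Rightarrow> case w of (a', l', b') \<Rightarrow> bil Q l l' - a * b' - a' * b)"

definition eB :: "real^'n^'n \<Rightarrow> real^'n \<Rightarrow> 'n mukai \<Rightarrow> 'n mukai" where
  "eB Q B v = (case v of (a, l, b) \<Rightarrow> (a, l + a *\<^sub>R B, b + bil Q B l + a / 2 * bil Q B B))"

definition kappa :: "nat \<Rightarrow> 'n mukai \<Rightarrow> 'n mukai" where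
  "kappa d v = (case v of (a, l, b) \<Rightarrow> (real d * a, l, b / real d))"

definition mukai_Z :: "(('n::finite) mukai) set" where
  "mukai_Z = {(a, l, b). a \<in> \<int> \<and> integral_vec l \<and> b \<in> \<int>}"

definition NS_tilde :: "real^'n^'n \<Rightarrow> real^'n \<Rightarrow> real^'n \<Rightarrow> ('n mukai) set" where
  "NS_tilde Q x y = {(a, l, b). a \<in> \<int> \<and> l \<in> NS Q x y \<and> b \<in> \<int>}"

text \<open>\<open>NS~(S,B) = e^B(omega)^perp \<inter> H~(S,Z)\<close>, perpendicularity to the complex vector
  e^B(omega) = e^B(0,x,0) + i e^B(0,y,0) for the complex-bilinear extension.\<close>
definition NS_tilde_B :: "real^'n^'n \<Rightarrow> real^'n \<Rightarrow> real^'n \<Rightarrow> real^'n \<Rightarrow> ('n mukai) set" where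
  "NS_tilde_B Q x y B = {v \<in> mukai_Z. mukai_pair Q v (eB Q B (0, x, 0)) = 0
                                       \<and> mukai_pair Q v (eB Q B (0, y, 0)) = 0}"

inductive_set lattice_gen :: "'a::ab_group_add set \<Rightarrow> 'a set" for A where
  zero: "0 \<in> lattice_gen A"
| gen: "a \<in> A \<Longrightarrow> a \<in> lattice_gen A"
| diff: "u \<in> lattice_gen A \<Longrightarrow> v \<in> lattice_gen A \<Longrightarrow> u - v \<in> lattice_gen A"

text \<open>Oriented positive 2-plane basis e^{B'}(1,0,-1), e^{B'}(0,h,0).\<close>
definition or_basis :: "real^'n^'n \<Rightarrow> real^'n \<Rightarrow> real^'n \<Rightarrow> 'n mukai \<times> 'n mukai" where
  "or_basis Q B' h = (eB Q B' (1, 0, -1), eB Q B' (0, h, 0))"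

text \<open>A map phi from a lattice oriented via B0 to a lattice oriented via B1 (both inside
  H~(S,Q), with the same ample h) preserves orientation iff the orthogonal projection of
  the image of the positive oriented basis (p1,p2) onto the span of the positive oriented
  basis (q1,q2) has positive determinant in the basis (q1,q2); this determinant equals
  det[(phi p_i, q_j)] / det Gram(q1,q2).\<close>
definition orientation_preserving ::
  "real^'n^'n \<Rightarrow> real^'n \<Rightarrow> real^'n \<Rightarrow> real^'n \<Rightarrow> ('n mukai \<Rightarrow> 'n mukai) \<Rightarrow> bool" where
  "orientation_preserving Q h B0 B1 \<phi> \<longleftrightarrow>
     (let (p1, p2) = or_basis Q B0 h; (q1, q2) = or_basis Q B1 h;
          M = mukai_pair Q (\<phi> p1) q1 * mukai_pair Q (\<phi> p2) q2
              - mukai_pair Q (\<phi> p1) q2 * mukai_pair Q (\<phi> p2) q1;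
          G = mukai_pair Q q1 q1 * mukai_pair Q q2 q2 - mukai_pair Q q1 q2 * mukai_pair Q q2 q1
      in M / G > 0)"

end

theory Submission imports Defs begin

(* Both e^B and kappa_d preserve the Mukai pairing, so phi is an isometry,
   and it is injective because e^{-B} inverts e^B.  For (a,l,b) in NS~(S) one writes
     phi(a,l,b) = (da, l + daB, 0) - (0, 0, -t),
   where the first summand lies in NS~(S,B) (because dB is integral) and d*t is an
   integer (because the K3 form is even), so the second is a multiple of (0,0,-1/d).
   Conversely, for (a,l,b) in NS~(S,B) the class l - aB lies in omega^perp, and the
   minimality of d = ord(alpha) forces d | a; this yields an explicit preimage in
   NS~(S).  Since phi commutes with differences, its image is a subgroup, hence all
   of L.  Finally the orientation quotient is (d + 1/d) (h,h) / (2 (h,h)) > 0.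
   The file first develops the bilinear form on H^2, the Mukai-side maps, the generated
   lattice and the Brauer order, then proves each of these facts separately. *)

section \<open>The bilinear form on H^2\<close>

lemma bil_add_left: "bil Q (u + v) w = bil Q u w + bil Q v w"
  by (simp add: bil_def inner_add_left)
lemma bil_add_right: "bil Q w (u + v) = bil Q w u + bil Q w v"
  by (simp add: bil_def matrix_vector_right_distrib inner_add_right)
lemma bil_diff_left: "bil Q (u - v) w = bil Q u w - bil Q v w"
  by (simp add: bil_def inner_diff_left)
lemma bil_diff_right: "bil Q w (u - v) = bil Q w u - bil Q w v"
  by (simp add: bil_def matrix_vector_mult_diff_distrib inner_diff_right)
lemma bil_scale_left: "bil Q (c *\<^sub>R u) w = c * bil Q u w"
  by (simp add: bil_def)
lemma bil_scale_right: "bil Q w (c *\<^sub>R u) = c * bil Q w u"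
  by (simp add: bil_def matrix_vector_mult_scaleR)
lemma bil_neg_left: "bil Q (- u) w = - bil Q u w"
  by (simp add: bil_def)
lemma bil_neg_right: "bil Q w (- u) = - bil Q w u"
  using bil_scale_right[of Q w "-1" u] by simp
lemma bil_zero_left [simp]: "bil Q 0 w = 0"
  by (simp add: bil_def)
lemma bil_zero_right [simp]: "bil Q w 0 = 0"
  by (simp add: bil_def)

lemmas bil_lin = bil_add_left bil_add_right bil_diff_left bil_diff_right
  bil_scale_left bil_scale_right bil_neg_left bil_neg_right

lemma bil_sym:
  assumes "transpose Q = Q"
  shows "bil Q u v = bil Q v u"
proof -
  have "bil Q u v = (transpose Q *v u) \<bullet> v"
    by (simp add: bil_def dot_lmul_matrix)
  then show ?thesis
    using assms by (simp add: bil_def inner_commute)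
qed

lemma bil_expand: "bil Q u v = (\<Sum>i\<in>UNIV. u $ i * (\<Sum>j\<in>UNIV. Q $ i $ j * v $ j))"
  by (simp add: bil_def inner_vec_def matrix_vector_mult_def)

lemma bil_axis: "bil Q (axis a 1) (axis a 1) = Q $ a $ a"
  by (simp add: bil_expand axis_def if_distrib[of "\<lambda>x. _ * x"] if_distrib[of "\<lambda>x. x * _"]
      sum.delta cong: if_cong)

definition even_form :: "real^'n^'n \<Rightarrow> bool" where
  "even_form Q \<longleftrightarrow> (\<forall>i j. Q $ i $ j \<in> \<int>) \<and> transpose Q = Q \<and> (\<forall>i. \<exists>k\<in>\<int>. Q $ i $ i = 2 * k)"

lemma K3_lattice_form_even: "K3_lattice_form Q \<Longrightarrow> even_form Q"
  by (simp add: K3_lattice_form_def even_form_def)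

lemma integral_vec_add: "integral_vec u \<Longrightarrow> integral_vec v \<Longrightarrow> integral_vec (u + v)"
  by (auto simp: integral_vec_def)
lemma integral_vec_diff: "integral_vec u \<Longrightarrow> integral_vec v \<Longrightarrow> integral_vec (u - v)"
  by (auto simp: integral_vec_def)
lemma integral_vec_scale: "c \<in> \<int> \<Longrightarrow> integral_vec u \<Longrightarrow> integral_vec (c *\<^sub>R u)"
  by (auto simp: integral_vec_def)
lemma integral_vec_zero: "integral_vec 0"
  by (auto simp: integral_vec_def)

lemma bil_integral:
  assumes "\<forall>i j. Q $ i $ j \<in> \<int>" "integral_vec u" "integral_vec v"
  shows "bil Q u v \<in> \<int>"
  using assms unfolding bil_expand integral_vec_def
  by (intro Ints_sum Ints_mult) auto

text \<open>On an even lattice every integral vector has even square; this is what makes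
  the H^4-component of the twisted vectors integral.\<close>
lemma bil_even:
  assumes Q: "even_form Q" and v: "integral_vec v"
  shows "\<exists>k\<in>\<int>. bil Q v v = 2 * k"
proof -
  have Qi: "\<forall>i j. Q $ i $ j \<in> \<int>" and Qs: "transpose Q = Q"
    and Qe: "\<forall>i. \<exists>k\<in>\<int>. Q $ i $ i = 2 * k"
    using Q by (auto simp: even_form_def)
  define w where "w S = (\<chi> i. if i \<in> S then v $ i else 0)" for S
  have w_integral: "integral_vec (w S)" for S
    using v by (auto simp: integral_vec_def w_def)
  have "\<exists>k\<in>\<int>. bil Q (w S) (w S) = 2 * k" if "finite S" for S
    using that
  proof (induction S rule: finite_induct)
    case empty
    have "w {} = 0" by (simp add: w_def vec_eq_iff)
    then show ?case by auto
  next
    case (insert a S)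
    then obtain k where k: "k \<in> \<int>" "bil Q (w S) (w S) = 2 * k" by auto
    obtain m where m: "m \<in> \<int>" "Q $ a $ a = 2 * m" using Qe by auto
    define t where "t = (v $ a) *\<^sub>R axis a (1::real)"
    have w_insert: "w (insert a S) = w S + t"
      using insert(2) by (auto simp: w_def t_def vec_eq_iff axis_def)
    have t_integral: "integral_vec t"
      using v by (auto simp: t_def integral_vec_def axis_def)
    have cross: "bil Q (w S) t \<in> \<int>"
      by (rule bil_integral[OF Qi w_integral t_integral])
    have va: "v $ a \<in> \<int>" using v by (auto simp: integral_vec_def)
    have "bil Q (w (insert a S)) (w (insert a S)) = bil Q (w S) (w S) + 2 * bil Q (w S) t + bil Q t t"
      unfolding w_insert by (simp add: bil_lin bil_sym[OF Qs, of t "w S"])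
    moreover have "bil Q t t = (v $ a) * (v $ a) * Q $ a $ a"
      by (simp add: t_def bil_lin bil_axis)
    ultimately have "bil Q (w (insert a S)) (w (insert a S)) = 2 * (k + bil Q (w S) t + v $ a * v $ a * m)"
      using k m by (simp add: algebra_simps)
    moreover have "k + bil Q (w S) t + v $ a * v $ a * m \<in> \<int>"
      using k cross m va by auto
    ultimately show ?case by blast
  qed
  moreover have "w UNIV = v" by (simp add: w_def vec_eq_iff)
  ultimately show ?thesis by fastforce
qed

section \<open>The maps e^B and kappa on Mukai vectors\<close>

lemma eB_isometry:
  assumes "transpose Q = Q"
  shows "mukai_pair Q (eB Q B v) (eB Q B w) = mukai_pair Q v w"
proof -
  obtain a l b a' l' b' where "v = (a, l, b)" "w = (a', l', b')" by (cases v, cases w)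
  then show ?thesis
    by (simp add: mukai_pair_def eB_def bil_lin bil_sym[OF assms, of l B]
        bil_sym[OF assms, of l' B] algebra_simps)
qed

lemma kappa_isometry:
  assumes "d > 0"
  shows "mukai_pair Q (kappa d v) (kappa d w) = mukai_pair Q v w"
  using assms by (cases v, cases w) (simp add: mukai_pair_def kappa_def field_simps)

lemma eB_compose:
  assumes "transpose Q = Q"
  shows "eB Q B (eB Q C v) = eB Q (B + C) v"
  by (cases v) (simp add: eB_def bil_lin bil_sym[OF assms, of C B] algebra_simps)

lemma eB_zero [simp]: "eB Q 0 v = v"
  by (cases v) (simp add: eB_def)

lemma eB_inverse:
  assumes "transpose Q = Q"
  shows "eB Q (- B) (eB Q B v) = v"
  by (simp add: eB_compose[OF assms])

lemma eB_diff: "eB Q B (v - w) = eB Q B v - eB Q B w"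
  by (cases v, cases w) (simp add: eB_def bil_lin algebra_simps diff_divide_distrib)

lemma kappa_diff: "kappa d (v - w) = kappa d v - kappa d w"
  by (cases v, cases w) (simp add: kappa_def algebra_simps diff_divide_distrib)

lemma kappa_inj: "d > 0 \<Longrightarrow> kappa d u = kappa d v \<Longrightarrow> u = v"
  by (cases u, cases v) (simp add: kappa_def)

section \<open>Generated lattices\<close>

lemma lattice_gen_neg: "u \<in> lattice_gen A \<Longrightarrow> - u \<in> lattice_gen A"
  using lattice_gen.diff[of 0 A u] lattice_gen.zero[of A] by simp

lemma lattice_gen_add: "u \<in> lattice_gen A \<Longrightarrow> v \<in> lattice_gen A \<Longrightarrow> u + v \<in> lattice_gen A"
  using lattice_gen.diff[of u A "- v"] lattice_gen_neg[of v A] by simp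

lemma lattice_gen_H4_multiple:
  assumes "((0::real), (0::real^'n), c) \<in> lattice_gen A"
  shows "((0::real), (0::real^'n), of_int m * c) \<in> lattice_gen A"
proof (induction m rule: int_induct[where k=0])
  case base
  then show ?case using lattice_gen.zero[of A] by (simp add: zero_prod_def)
next
  case (step1 i)
  have "((0::real), (0::real^'n), of_int (i + 1) * c) = (0, 0, of_int i * c) + (0, 0, c)"
    by (simp add: algebra_simps)
  then show ?case using lattice_gen_add[OF step1(2) assms] by simp
next
  case (step2 i)
  have "((0::real), (0::real^'n), of_int (i - 1) * c) = (0, 0, of_int i * c) - (0, 0, c)"
    by (simp add: algebra_simps)
  then show ?case using lattice_gen.diff[OF step2(2) assms] by simp
qed

lemma lattice_gen_subset_image:
  fixes f :: "'a::ab_group_add \<Rightarrow> 'b::ab_group_add"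
  assumes f_diff: "\<And>u v. f (u - v) = f u - f v"
    and D_diff: "\<And>u v. u \<in> D \<Longrightarrow> v \<in> D \<Longrightarrow> u - v \<in> D" and D0: "0 \<in> D"
    and gens: "A \<subseteq> f ` D"
  shows "lattice_gen A \<subseteq> f ` D"
proof
  fix z assume "z \<in> lattice_gen A"
  then show "z \<in> f ` D"
  proof (induction z rule: lattice_gen.induct)
    case zero
    have "f 0 = 0" using f_diff[of 0 0] by simp
    then show ?case using D0 by (metis image_eqI)
  next
    case (gen a)
    then show ?case using gens by blast
  next
    case (diff u v)
    then obtain u' v' where "u' \<in> D" "v' \<in> D" "u = f u'" "v = f v'" by blast
    then have "u - v = f (u' - v')" "u' - v' \<in> D" using f_diff D_diff by simp_all
    then show ?case by blast
  qed
qed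

section \<open>The order of the Brauer class\<close>

text \<open>The class of v in H^2(S,Q) is trivial in Br(S) = H^2(S,Q)/(NS(S)_Q + H^2(S,Z)).\<close>
definition brauer_trivial :: "real^'n^'n \<Rightarrow> real^'n \<Rightarrow> real^'n \<Rightarrow> real^'n \<Rightarrow> bool" where
  "brauer_trivial Q x y v \<longleftrightarrow> v \<in> {u + w | u w. u \<in> NSQ Q x y \<and> integral_vec w}"

lemma rational_vec_common_denominator:
  assumes "rational_vec (B::real^'n)"
  shows "\<exists>N::nat. N > 0 \<and> integral_vec (real N *\<^sub>R B)"
proof -
  have "\<exists>n::nat. n > 0 \<and> real n * B $ i \<in> \<int>" for i
  proof -
    have "B $ i \<in> \<rat>" using assms by (auto simp: rational_vec_def)
    then obtain a b :: int where ab: "b > 0" "B $ i = of_int a / of_int b"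
      by (elim Rats_cases') auto
    then have "real (nat b) * B $ i = of_int a" by simp
    then show ?thesis using ab by (intro exI[of _ "nat b"]) auto
  qed
  then obtain f where f: "\<And>i. f i > 0 \<and> real (f i) * B $ i \<in> \<int>" by metis
  have "integral_vec (real (prod f UNIV) *\<^sub>R B)"
    unfolding integral_vec_def
  proof
    fix i
    have "(real (prod f UNIV) *\<^sub>R B) $ i = real (prod f (UNIV - {i})) * (real (f i) * B $ i)"
      by (simp add: prod.remove[of UNIV i f])
    then show "(real (prod f UNIV) *\<^sub>R B) $ i \<in> \<int>"
      using f[of i] by (metis Ints_mult Ints_of_nat)
  qed
  moreover have "prod f UNIV > 0" using f by simp
  ultimately show ?thesis by blast
qed

text \<open>For a rational B-field the Brauer order is positive and minimal among the
  positive n with nB Brauer-trivial (every integral multiple is trivial).\<close>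
lemma brauer_ord_minimal:
  fixes Q :: "real^'n^'n" and x y B :: "real^'n"
  assumes "rational_vec B" and "d = brauer_ord Q x y B"
  shows "d > 0" and "\<And>n. n > 0 \<Longrightarrow> brauer_trivial Q x y (real n *\<^sub>R B) \<Longrightarrow> d \<le> n"
proof -
  define P where "P n \<longleftrightarrow> n > 0 \<and> brauer_trivial Q x y (real n *\<^sub>R B)" for n
  have d_Least: "d = (LEAST n. P n)"
    using assms(2) by (simp add: brauer_ord_def P_def brauer_trivial_def)
  obtain N where N: "N > 0" "integral_vec (real N *\<^sub>R B)"
    using rational_vec_common_denominator[OF assms(1)] by auto
  have "(0::real^'n) \<in> NS Q x y" by (simp add: NS_def integral_vec_zero)
  then have "(0::real^'n) \<in> NSQ Q x y" unfolding NSQ_def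
    by (intro CollectI exI[of _ "1::nat"] exI[of _ 0]) auto
  then have "P N" using N unfolding P_def brauer_trivial_def by force
  then show "d > 0" unfolding d_Least P_def by (rule LeastI2_ex[OF exI]) auto
  show "\<And>n. n > 0 \<Longrightarrow> brauer_trivial Q x y (real n *\<^sub>R B) \<Longrightarrow> d \<le> n"
    unfolding d_Least by (rule Least_le) (simp add: P_def)
qed

text \<open>If l - aB is orthogonal to omega for an integral l, then a multiple of the Brauer
  class is trivial with multiplier gcd(a,d); minimality of d forces d | a.\<close>
lemma brauer_ord_dvd:
  fixes Q :: "real^'n^'n" and x y B l :: "real^'n" and d :: nat and a :: int
  assumes d_pos: "d > 0" and dB: "integral_vec (real d *\<^sub>R B)"
    and d_min: "\<And>n. n > 0 \<Longrightarrow> brauer_trivial Q x y (real n *\<^sub>R B) \<Longrightarrow> d \<le> n"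
    and l: "integral_vec l"
    and perp_x: "bil Q (l - of_int a *\<^sub>R B) x = 0" and perp_y: "bil Q (l - of_int a *\<^sub>R B) y = 0"
  shows "int d dvd a"
proof -
  define g where "g = gcd a (int d)"
  have g_pos: "g > 0" using d_pos by (simp add: g_def)
  obtain u w where bezout: "u * a + w * int d = g"
    using bezout_int[of a "int d"] g_def by auto
  define r where "r = l - of_int a *\<^sub>R B"
  have "real d *\<^sub>R r = real d *\<^sub>R l - of_int a *\<^sub>R (real d *\<^sub>R B)"
    by (simp add: r_def algebra_simps)
  then have dr_integral: "integral_vec (real d *\<^sub>R r)"
    using integral_vec_diff[OF integral_vec_scale[OF _ l] integral_vec_scale[OF Ints_of_int dB]]
    by simp
  define n where "n = (- of_int u) *\<^sub>R (real d *\<^sub>R r)"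
  have n_NS: "n \<in> NS Q x y"
    using integral_vec_scale[OF _ dr_integral, of "- of_int u"] perp_x perp_y
    by (simp add: NS_def n_def bil_lin r_def)
  have n_NSQ: "(1 / real d) *\<^sub>R n \<in> NSQ Q x y"
    unfolding NSQ_def using n_NS d_pos by blast
  have rest_integral: "integral_vec (of_int u *\<^sub>R l + of_int w *\<^sub>R (real d *\<^sub>R B))"
    using integral_vec_add[OF integral_vec_scale[OF Ints_of_int l] integral_vec_scale[OF Ints_of_int dB]]
    by simp
  have "real (nat g) = of_int u * of_int a + of_int w * real d"
    using bezout g_pos by (metis of_int_add of_int_mult of_int_of_nat_eq of_nat_nat less_imp_le)
  then have "real (nat g) *\<^sub>R B = (1 / real d) *\<^sub>R n + (of_int u *\<^sub>R l + of_int w *\<^sub>R (real d *\<^sub>R B))"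
    using d_pos by (simp add: n_def r_def algebra_simps)
  then have "brauer_trivial Q x y (real (nat g) *\<^sub>R B)"
    unfolding brauer_trivial_def using n_NSQ rest_integral by blast
  then have "d \<le> nat g" using d_min g_pos by simp
  moreover have "g \<le> int d" using d_pos by (simp add: g_def)
  ultimately have "g = int d" using g_pos by linarith
  then show ?thesis by (metis g_def gcd_dvd1)
qed

section \<open>The twisting map e^B o kappa_d\<close>

lemma twist_isometry:
  assumes "transpose Q = Q" and "d > 0"
  shows "mukai_pair Q ((eB Q B \<circ> kappa d) u) ((eB Q B \<circ> kappa d) v) = mukai_pair Q u v"
  by (simp add: eB_isometry[OF assms(1)] kappa_isometry[OF assms(2)])

lemma twist_inj:
  assumes "transpose Q = Q" and "d > 0"
  shows "inj (eB Q B \<circ> kappa d)"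
proof (rule injI)
  fix u v assume "(eB Q B \<circ> kappa d) u = (eB Q B \<circ> kappa d) v"
  then have "eB Q (- B) (eB Q B (kappa d u)) = eB Q (- B) (eB Q B (kappa d v))" by simp
  then show "u = v" using kappa_inj[OF assms(2)] by (simp add: eB_inverse[OF assms(1)])
qed

lemma twist_diff: "(eB Q B \<circ> kappa d) (u - v) = (eB Q B \<circ> kappa d) u - (eB Q B \<circ> kappa d) v"
  by (simp add: kappa_diff eB_diff)

text \<open>The image of NS~(S) lies in L: split phi(a,l,b) into an element of NS~(S,B) and
  an integer multiple of (0,0,-1/d).\<close>
lemma twist_image_in_lattice:
  fixes Q :: "real^'n^'n" and x y B :: "real^'n"
  assumes Q: "even_form Q" and d_pos: "d > 0" and dB: "integral_vec (real d *\<^sub>R B)"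
    and u: "u \<in> NS_tilde Q x y"
  shows "(eB Q B \<circ> kappa d) u \<in> lattice_gen (NS_tilde_B Q x y B \<union> {(0, 0, - 1 / real d)})"
    (is "_ \<in> ?L")
proof -
  obtain a l b where u_eq: "u = (a, l, b)" by (cases u)
  have a: "a \<in> \<int>" and b: "b \<in> \<int>" and l: "integral_vec l"
    and lx: "bil Q l x = 0" and ly: "bil Q l y = 0"
    using u by (auto simp: u_eq NS_tilde_def NS_def)
  have Qi: "\<forall>i j. Q $ i $ j \<in> \<int>" using Q by (simp add: even_form_def)
  obtain m0 where m0: "m0 \<in> \<int>" "bil Q (real d *\<^sub>R B) (real d *\<^sub>R B) = 2 * m0"
    using bil_even[OF Q dB] by auto
  define t where "t = b / real d + bil Q B l + real d * a / 2 * bil Q B B"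
  have split: "(eB Q B \<circ> kappa d) u = (real d * a, l + (real d * a) *\<^sub>R B, 0) - (0, 0, - t)"
    by (simp add: u_eq kappa_def eB_def t_def)
  have "real d * t = b + bil Q (real d *\<^sub>R B) l + a * m0"
    using m0 d_pos by (simp add: t_def bil_lin field_simps)
  moreover have "b + bil Q (real d *\<^sub>R B) l + a * m0 \<in> \<int>"
    using a b m0 bil_integral[OF Qi dB l] by auto
  ultimately obtain m where m: "real d * t = of_int m" by (metis Ints_cases)
  have "((0::real), (0::real^'n), - 1 / real d) \<in> ?L" by (intro lattice_gen.gen) simp
  moreover have "((0::real), (0::real^'n), - t) = (0, 0, of_int m * (- 1 / real d))"
    using m d_pos by (simp add: field_simps)
  ultimately have H4_part: "((0::real), (0::real^'n), - t) \<in> ?L"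
    using lattice_gen_H4_multiple by metis
  have "l + (real d * a) *\<^sub>R B = l + a *\<^sub>R (real d *\<^sub>R B)" by simp
  then have "integral_vec (l + (real d * a) *\<^sub>R B)"
    using integral_vec_add[OF l integral_vec_scale[OF a dB]] by (simp add: mult.commute)
  then have "(real d * a, l + (real d * a) *\<^sub>R B, 0) \<in> NS_tilde_B Q x y B"
    using a lx ly by (simp add: NS_tilde_B_def mukai_Z_def mukai_pair_def eB_def bil_lin)
  then have NSB_part: "(real d * a, l + (real d * a) *\<^sub>R B, 0) \<in> ?L"
    by (intro lattice_gen.gen) simp
  show ?thesis
    unfolding split by (rule lattice_gen.diff[OF NSB_part H4_part])
qed

text \<open>Every element of NS~(S,B) has a preimage in NS~(S): its H^0-component is divisible
  by d by minimality of the Brauer order.\<close>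
lemma twist_hits_NS_tilde_B:
  fixes Q :: "real^'n^'n" and x y B :: "real^'n"
  assumes Q: "even_form Q" and d_pos: "d > 0" and dB: "integral_vec (real d *\<^sub>R B)"
    and d_min: "\<And>n. n > 0 \<Longrightarrow> brauer_trivial Q x y (real n *\<^sub>R B) \<Longrightarrow> d \<le> n"
    and z: "z \<in> NS_tilde_B Q x y B"
  shows "z \<in> (eB Q B \<circ> kappa d) ` NS_tilde Q x y"
proof -
  have Qi: "\<forall>i j. Q $ i $ j \<in> \<int>" and Qs: "transpose Q = Q"
    using Q by (auto simp: even_form_def)
  obtain a l b where z_eq: "z = (a, l, b)" by (cases z)
  have a: "a \<in> \<int>" and b: "b \<in> \<int>" and l: "integral_vec l"
    and perp_x: "bil Q l x - a * bil Q B x = 0" and perp_y: "bil Q l y - a * bil Q B y = 0"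
    using z by (auto simp: z_eq NS_tilde_B_def mukai_Z_def mukai_pair_def eB_def)
  obtain ai where ai: "a = of_int ai" using a by (metis Ints_cases)
  have "int d dvd ai"
    using perp_x perp_y ai by (intro brauer_ord_dvd[where x=x and y=y, OF d_pos dB d_min l]) (simp_all add: bil_lin)
  then obtain k where "ai = int d * k" by (auto simp: dvd_def)
  then have ak: "a = real d * of_int k" using ai by simp
  obtain m0 where m0: "m0 \<in> \<int>" "bil Q (real d *\<^sub>R B) (real d *\<^sub>R B) = 2 * m0"
    using bil_even[OF Q dB] by auto
  define w where "w = (of_int k :: real, l - a *\<^sub>R B, real d * (b - bil Q B l + a / 2 * bil Q B B))"
  have "l - a *\<^sub>R B = l - of_int k *\<^sub>R (real d *\<^sub>R B)" by (simp add: ak)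
  then have l_shift: "integral_vec (l - a *\<^sub>R B)"
    using integral_vec_diff[OF l integral_vec_scale[OF Ints_of_int dB], of k] by (simp only:)
  have "real d * (b - bil Q B l + a / 2 * bil Q B B) = real d * b - bil Q (real d *\<^sub>R B) l + of_int k * m0"
    using m0 ak by (simp add: bil_lin field_simps)
  moreover have "real d * b - bil Q (real d *\<^sub>R B) l + of_int k * m0 \<in> \<int>"
    using b m0 bil_integral[OF Qi dB l] by auto
  ultimately have w_NS: "w \<in> NS_tilde Q x y"
    using l_shift perp_x perp_y by (simp add: w_def NS_tilde_def NS_def bil_lin)
  have "kappa d w = eB Q (- B) z"
    using d_pos by (simp add: w_def kappa_def eB_def z_eq bil_lin ak)
  then have "(eB Q B \<circ> kappa d) w = z" by (simp add: eB_compose[OF Qs])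
  then show ?thesis using w_NS by blast
qed

lemma NS_tilde_diff: "u \<in> NS_tilde Q x y \<Longrightarrow> v \<in> NS_tilde Q x y \<Longrightarrow> u - v \<in> NS_tilde Q x y"
  by (cases u, cases v) (auto simp: NS_tilde_def NS_def bil_lin intro!: integral_vec_diff)

lemma NS_tilde_zero: "0 \<in> NS_tilde Q x y"
  by (simp add: NS_tilde_def NS_def integral_vec_zero zero_prod_def)

lemma twist_bij:
  fixes Q :: "real^'n^'n" and x y B :: "real^'n"
  assumes Q: "even_form Q" and d_pos: "d > 0" and dB: "integral_vec (real d *\<^sub>R B)"
    and d_min: "\<And>n. n > 0 \<Longrightarrow> brauer_trivial Q x y (real n *\<^sub>R B) \<Longrightarrow> d \<le> n"
  shows "bij_betw (eB Q B \<circ> kappa d) (NS_tilde Q x y)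
           (lattice_gen (NS_tilde_B Q x y B \<union> {(0, 0, - 1 / real d)}))"
proof -
  have Qs: "transpose Q = Q" using Q by (simp add: even_form_def)
  have "(0, 0, - 1 / real d) = (eB Q B \<circ> kappa d) (0, 0, -1)"
    by (simp add: kappa_def eB_def)
  moreover have "((0::real), (0::real^'n), - 1::real) \<in> NS_tilde Q x y"
    by (simp add: NS_tilde_def NS_def integral_vec_zero)
  ultimately have "NS_tilde_B Q x y B \<union> {(0, 0, - 1 / real d)} \<subseteq> (eB Q B \<circ> kappa d) ` NS_tilde Q x y"
    using twist_hits_NS_tilde_B[OF Q d_pos dB d_min] by blast
  then have "lattice_gen (NS_tilde_B Q x y B \<union> {(0, 0, - 1 / real d)}) \<subseteq> (eB Q B \<circ> kappa d) ` NS_tilde Q x y"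
    by (intro lattice_gen_subset_image twist_diff NS_tilde_diff NS_tilde_zero)
  then show ?thesis
    using twist_image_in_lattice[OF Q d_pos dB] inj_on_subset[OF twist_inj[OF Qs d_pos]]
    by (auto simp: bij_betw_def)
qed

text \<open>Orientation: the matrix of pairings between phi(1,0,-1), phi(0,h,0) and the
  B-twisted basis is diagonal with entries d + 1/d and (h,h).\<close>
lemma twist_orientation_preserving:
  assumes Qs: "transpose Q = Q" and d_pos: "d > 0" and h: "bil Q h h > 0"
  shows "orientation_preserving Q h 0 B (eB Q B \<circ> kappa d)"
proof -
  have "(real d + 1 / real d) * bil Q h h / (2 * bil Q h h) > 0"
    using h d_pos by (simp add: add_pos_pos)
  moreover have "mukai_pair Q (kappa d (1, 0, -1)) (1, 0, -1) = real d + 1 / real d"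
    "mukai_pair Q (kappa d (0, h, 0)) (0, h, 0) = bil Q h h"
    "mukai_pair Q (kappa d (1, 0, -1)) (0, h, 0) = 0"
    "mukai_pair Q (kappa d (0, h, 0)) (1, 0, -1) = 0"
    using d_pos by (simp_all add: kappa_def mukai_pair_def)
  moreover have "mukai_pair Q (1, 0, -1) (1, 0, -1) = 2"
    "mukai_pair Q (0, h, 0) (0, h, 0) = bil Q h h"
    "mukai_pair Q (1, 0, -1) (0, h, 0) = 0" "mukai_pair Q (0, h, 0) (1, 0, -1) = 0"
    by (simp_all add: mukai_pair_def)
  ultimately show ?thesis
    unfolding orientation_preserving_def or_basis_def Let_def eB_zero
    by (simp add: eB_isometry[OF Qs])
qed

theorem proposition2p4:
  fixes Q :: "real^'n^'n" and x y h B :: "real^'n" and d :: nat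
  assumes "K3_lattice_form Q"
    and "K3_period Q x y"
    and "h \<in> NS Q x y" and "bil Q h h > 0"
    and "rational_vec B"
    and "d = brauer_ord Q x y B"
    and "integral_vec (real d *\<^sub>R B)"
  shows "bij_betw (eB Q B \<circ> kappa d) (NS_tilde Q x y)
           (lattice_gen (NS_tilde_B Q x y B \<union> {(0, 0, - 1 / real d)}))
       \<and> (\<forall>u\<in>NS_tilde Q x y. \<forall>v\<in>NS_tilde Q x y.
            mukai_pair Q ((eB Q B \<circ> kappa d) u) ((eB Q B \<circ> kappa d) v) = mukai_pair Q u v)
       \<and> orientation_preserving Q h 0 B (eB Q B \<circ> kappa d)"
proof -
  have Q: "even_form Q" by (rule K3_lattice_form_even[OF assms(1)])
  then have Qs: "transpose Q = Q" by (simp add: even_form_def)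
  have d_pos: "d > 0"
    and d_min: "\<And>n. n > 0 \<Longrightarrow> brauer_trivial Q x y (real n *\<^sub>R B) \<Longrightarrow> d \<le> n"
    using brauer_ord_minimal[OF assms(5,6)] by auto
  show ?thesis
    using twist_bij[OF Q d_pos assms(7) d_min] twist_isometry[OF Qs d_pos]
      twist_orientation_preserving[OF Qs d_pos assms(4)]
    by blast
qed

end
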